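(* Let $v\ge 2$ be an integer and $p$ a prime with $p\equiv 1\pmod v$ and $p-1>v$. Let $T$ be the number of permutations $\pi$ of $\{1,\dots,p-1\}$ such that the sequence $\pi_v=(\pi(1)\,\%\,v,\dots,\pi(p-1)\,\%\,v)$ has least period $p-1$. Let $k=(p-1)/v$, let $Q$ be the set of prime divisors of $k$ and $q'=\min Q$. Then $$(p-1)!\left(1-\sum_{q\in Q}\frac{\left(\frac{p-1}{q}\right)!\,(k!)^v}{(p-1)!\,\left(\left(\frac{k}{q}\right)!\right)^v}\right)\ \le\ T\ \le\ (p-1)!\left(1-\frac{\left(\frac{p-1}{q'}\right)!\,(k!)^v}{(p-1)!\,\left(\left(\frac{k}{q'}\right)!\right)^v}\right).$$ Moreover, for fixed $v$: for every $\varepsilon>0$ there exists $n_\varepsilon$ such that for all primes $p\ge n_\varepsilon$ with $p\equiv1\pmod v$, $(p-1)!(1-\varepsilon)\le T\le (p-1)!$.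
   Context: $x\,\%\,v$ is the least nonnegative remainder modulo $v$. A sequence of length $N$ is regarded cyclically; its least period is the smallest $\rho>0$ with $s(i+\rho)=s(i)$ for all indices $i$ taken modulo $N$. *)

theory Defs
  imports Complex_Main "HOL-Combinatorics.Permutations" "HOL-Computational_Algebra.Primes"
begin

text \<open>A sequence s indexed by 1..N, regarded cyclically. rho is a period if
  s(i + rho) = s(i) for all i, indices taken modulo N (represented in 1..N).\<close>
definition is_cyc_period :: "(nat \<Rightarrow> 'a) \<Rightarrow> nat \<Rightarrow> nat \<Rightarrow> bool" where
  "is_cyc_period s N \<rho> \<longleftrightarrow> (\<forall>i\<in>{1..N}. s ((i - 1 + \<rho>) mod N + 1) = s i)"

definition least_cyc_period :: "(nat \<Rightarrow> 'a) \<Rightarrow> nat \<Rightarrow> nat" where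
  "least_cyc_period s N = (LEAST \<rho>. 0 < \<rho> \<and> is_cyc_period s N \<rho>)"

definition T_count :: "nat \<Rightarrow> nat \<Rightarrow> nat" where
  "T_count v p = card {\<pi>. \<pi> permutes {1..p-1} \<and>
      least_cyc_period (\<lambda>i. \<pi> i mod v) (p - 1) = p - 1}"

end

theory Submission
  imports Defs "HOL-Real_Asymp.Real_Asymp"
begin

(* Write N = p - 1 = k v.  A permutation is not counted by T exactly when its residue sequence
   has a proper cyclic period.  The least period divides N, so a proper period may be taken to
   be N/q for a prime q; as every residue occurs exactly k times, counting along such a period
   shows that q divides k.  The permutations whose residue sequence has period N/q are counted
   exactly: each balanced residue word (every residue occurring equally often) arises from
   (k!)^v permutations, and N/q-periodic balanced words of length N correspond to balanced
   words of length N/q, of which there are (N/q)!/((k/q)!)^v.  Hence a fraction tm q of all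
   permutations has period N/q, and the union bound and monotonicity give the two estimates.
   Since (v j)!/(j!)^v at least doubles when j grows by one, tm q <= 2^(-k/2); with at most k
   primes q the sum is at most k 2^(-k/2), which tends to 0. *)

section \<open>Permutations with a prescribed colour pattern\<close>

definition colour_injections :: "('x \<Rightarrow> 'c) \<Rightarrow> ('i \<Rightarrow> 'c) \<Rightarrow> 'i set \<Rightarrow> 'x set \<Rightarrow> ('i \<Rightarrow> 'x) set" where
  "colour_injections g r I X = {f \<in> I \<rightarrow>\<^sub>E X. inj_on f I \<and> (\<forall>i\<in>I. g (f i) = r i)}"

lemma finite_colour_injections: "finite I \<Longrightarrow> finite X \<Longrightarrow> finite (colour_injections g r I X)"
  unfolding colour_injections_def by (rule finite_subset[of _ "I \<rightarrow>\<^sub>E X"]) (auto intro: finite_PiE)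

lemma bij_betw_colour_injections_insert:
  assumes "a \<notin> I"
  shows "bij_betw (\<lambda>(x, f). f(a := x)) (SIGMA x:{x\<in>X. g x = r a}. colour_injections g r I (X - {x}))
           (colour_injections g r (insert a I) X)"
proof (rule bij_betw_byWitness[where f' = "\<lambda>f. (f a, f(a := undefined))"])
  let ?S = "SIGMA x:{x\<in>X. g x = r a}. colour_injections g r I (X - {x})"
  show "\<forall>z\<in>?S. (\<lambda>f. (f a, f(a := undefined))) ((\<lambda>(x, f). f(a := x)) z) = z"
    using assms by (auto simp: colour_injections_def PiE_iff extensional_def fun_eq_iff)
  show "\<forall>h\<in>colour_injections g r (insert a I) X. (\<lambda>(x, f). f(a := x)) ((\<lambda>f. (f a, f(a := undefined))) h) = h"
    by auto
  show "(\<lambda>(x, f). f(a := x)) ` ?S \<subseteq> colour_injections g r (insert a I) X"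
  proof (rule image_subsetI)
    fix z assume "z \<in> ?S"
    then obtain x f where z: "z = (x, f)" and x: "x \<in> X" "g x = r a"
      and f: "f \<in> I \<rightarrow>\<^sub>E (X - {x})" "inj_on f I" "\<forall>i\<in>I. g (f i) = r i"
      by (auto simp: colour_injections_def)
    have "f(a := x) \<in> insert a I \<rightarrow>\<^sub>E X" "inj_on (f(a := x)) (insert a I)"
      using assms x f by (auto simp: PiE_iff) (fastforce simp: inj_on_def PiE_iff)
    then show "(\<lambda>(x, f). f(a := x)) z \<in> colour_injections g r (insert a I) X"
      using x f z by (auto simp: colour_injections_def)
  qed
  show "(\<lambda>f. (f a, f(a := undefined))) ` colour_injections g r (insert a I) X \<subseteq> ?S"
  proof (rule image_subsetI)
    fix h assume h: "h \<in> colour_injections g r (insert a I) X"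
    have "h(a := undefined) \<in> I \<rightarrow>\<^sub>E (X - {h a})" "inj_on (h(a := undefined)) I"
      using h assms by (auto simp: colour_injections_def PiE_iff inj_on_def)
    then show "(h a, h(a := undefined)) \<in> ?S"
      using h assms by (auto simp: colour_injections_def)
  qed
qed

lemma card_colour_injections:
  assumes "finite I" "finite X" "finite C" "r ` I \<subseteq> C"
    and "\<And>c. card {i\<in>I. r i = c} = card {x\<in>X. g x = c}"
  shows "card (colour_injections g r I X) = (\<Prod>c\<in>C. fact (card {i\<in>I. r i = c}))"
  using assms
proof (induction I arbitrary: X rule: finite_induct)
  case empty
  then show ?case by (simp add: colour_injections_def)
next
  case (insert a I)
  define P where "P = (\<Prod>c\<in>C. fact (card {i\<in>I. r i = c}) :: nat)"
  define n where "n = card {i\<in>insert a I. r i = r a}"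
  have card_insert: "card {i\<in>insert a I. r i = c}
      = (if c = r a then Suc (card {i\<in>I. r i = c}) else card {i\<in>I. r i = c})" for c
  proof -
    have "{i\<in>insert a I. r i = c}
        = (if c = r a then insert a {i\<in>I. r i = c} else {i\<in>I. r i = c})"
      by auto
    then show ?thesis using insert.hyps by simp
  qed
  have card_rest: "card (colour_injections g r I (X - {x})) = P" if "x \<in> X" "g x = r a" for x
  proof -
    have "card {i\<in>I. r i = c} = card {x'\<in>X - {x}. g x' = c}" for c
    proof -
      have "{x'\<in>X - {x}. g x' = c} = {x'\<in>X. g x' = c} - {x}" by auto
      then show ?thesis
        using card_insert[of c] insert.prems(4)[of c] that by (cases "c = r a") auto
    qed
    then show ?thesis unfolding P_def using insert.prems by (intro insert.IH) auto
  qed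
  have "card (colour_injections g r (insert a I) X)
      = card (SIGMA x:{x\<in>X. g x = r a}. colour_injections g r I (X - {x}))"
    by (rule bij_betw_same_card[OF bij_betw_colour_injections_insert[OF insert.hyps(2)], symmetric])
  also have "\<dots> = (\<Sum>x\<in>{x\<in>X. g x = r a}. card (colour_injections g r I (X - {x})))"
    using insert.prems(1) insert.hyps(1) by (intro card_SigmaI) (auto intro: finite_colour_injections)
  also have "\<dots> = card {x\<in>X. g x = r a} * P"
    using card_rest by simp
  also have "card {x\<in>X. g x = r a} = n" using insert.prems(4) by (simp add: n_def)
  also have "n * P = (\<Prod>c\<in>C. (if c = r a then n else 1) * fact (card {i\<in>I. r i = c}))"
    unfolding P_def prod.distrib using insert.prems(2,3) by simp
  also have "\<dots> = (\<Prod>c\<in>C. fact (card {i\<in>insert a I. r i = c}))"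
    by (rule prod.cong) (simp_all only: card_insert n_def fact_Suc, simp)
  finally show ?case .
qed

lemma card_permutes_colour_pattern:
  fixes g r :: "'a \<Rightarrow> 'c"
  assumes "finite S" "finite C" "r ` S \<subseteq> C"
    and "\<And>c. card {i\<in>S. r i = c} = card {x\<in>S. g x = c}"
  shows "card {\<pi>. \<pi> permutes S \<and> (\<forall>i\<in>S. g (\<pi> i) = r i)} = (\<Prod>c\<in>C. fact (card {i\<in>S. r i = c}))"
proof -
  let ?P = "{\<pi>. \<pi> permutes S \<and> (\<forall>i\<in>S. g (\<pi> i) = r i)}"
  let ?F = "colour_injections g r S S"
  have "bij_betw (\<lambda>\<pi>. restrict \<pi> S) ?P ?F"
  proof (rule bij_betw_byWitness[where f' = "\<lambda>f. restrict_id f S"])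
    show "\<forall>\<pi>\<in>?P. restrict_id (restrict \<pi> S) S = \<pi>"
      by (auto simp: fun_eq_iff restrict_id_def permutes_not_in)
    show "\<forall>f\<in>?F. restrict (restrict_id f S) S = f"
      by (auto simp: colour_injections_def fun_eq_iff PiE_iff extensional_def)
    show "(\<lambda>\<pi>. restrict \<pi> S) ` ?P \<subseteq> ?F"
      by (auto simp: colour_injections_def PiE_iff permutes_in_image inj_on_def
          permutes_inj_on[THEN inj_onD])
    show "(\<lambda>f. restrict_id f S) ` ?F \<subseteq> ?P"
    proof (rule image_subsetI)
      fix f assume f: "f \<in> ?F"
      then have "f ` S = S" using assms(1) by (intro endo_inj_surj) (auto simp: colour_injections_def PiE_iff)
      then have "restrict_id f S permutes S"
        using f by (intro permutes_restrict_id) (auto simp: colour_injections_def bij_betw_def)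
      then show "restrict_id f S \<in> ?P" using f by (auto simp: colour_injections_def)
    qed
  qed
  then show ?thesis
    using card_colour_injections[OF assms(1,1,2,3,4)] by (simp add: bij_betw_same_card)
qed

lemma card_permutes_colour_class:
  assumes "\<pi> permutes S"
  shows "card {i\<in>S. g (\<pi> i) = c} = card {x\<in>S. g x = c}"
proof -
  have "\<pi> ` {i\<in>S. g (\<pi> i) = c} = {x\<in>S. g x = c}"
    using permutes_image[OF assms] by force
  then show ?thesis using card_image[OF permutes_inj_on[OF assms]] by metis
qed

lemma card_permutes_by_colour_pattern:
  fixes g :: "'a \<Rightarrow> 'c"
  assumes "finite S" "finite C" "g ` S \<subseteq> C"
  shows "card {\<pi>. \<pi> permutes S \<and> P (restrict (g \<circ> \<pi>) S)}
    = card {r \<in> S \<rightarrow>\<^sub>E C. (\<forall>c. card {i\<in>S. r i = c} = card {x\<in>S. g x = c}) \<and> P r}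
      * (\<Prod>c\<in>C. fact (card {x\<in>S. g x = c}))"
proof -
  define R where "R = {r \<in> S \<rightarrow>\<^sub>E C. (\<forall>c. card {i\<in>S. r i = c} = card {x\<in>S. g x = c}) \<and> P r}"
  define fibre where "fibre r = {\<pi>. \<pi> permutes S \<and> restrict (g \<circ> \<pi>) S = r}" for r
  have decomp: "{\<pi>. \<pi> permutes S \<and> P (restrict (g \<circ> \<pi>) S)} = (\<Union>r\<in>R. fibre r)"
  proof (intro equalityI subsetI)
    fix \<pi> assume "\<pi> \<in> {\<pi>. \<pi> permutes S \<and> P (restrict (g \<circ> \<pi>) S)}"
    then have \<pi>: "\<pi> permutes S" "P (restrict (g \<circ> \<pi>) S)" by auto
    have "card {i\<in>S. restrict (g \<circ> \<pi>) S i = c} = card {x\<in>S. g x = c}" for c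
    proof -
      have "{i\<in>S. restrict (g \<circ> \<pi>) S i = c} = {i\<in>S. g (\<pi> i) = c}" by auto
      then show ?thesis using card_permutes_colour_class[OF \<pi>(1), of g c] by simp
    qed
    then have "restrict (g \<circ> \<pi>) S \<in> R"
      using \<pi> assms(3) by (auto simp: R_def permutes_in_image)
    then show "\<pi> \<in> (\<Union>r\<in>R. fibre r)" using \<pi>(1) by (auto simp: fibre_def)
  qed (auto simp: fibre_def R_def)
  have card_fibre: "card (fibre r) = (\<Prod>c\<in>C. fact (card {x\<in>S. g x = c}))" if "r \<in> R" for r
  proof -
    have r: "r \<in> S \<rightarrow>\<^sub>E C" "\<And>c. card {i\<in>S. r i = c} = card {x\<in>S. g x = c}"
      using that by (auto simp: R_def)
    have "fibre r = {\<pi>. \<pi> permutes S \<and> (\<forall>i\<in>S. g (\<pi> i) = r i)}"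
      using r(1) by (auto simp: fibre_def fun_eq_iff PiE_iff extensional_def)
    then show ?thesis
      using card_permutes_colour_pattern[OF assms(1,2) _ r(2)] r by (auto simp: PiE_iff)
  qed
  have "card (\<Union>r\<in>R. fibre r) = (\<Sum>r\<in>R. card (fibre r))"
  proof (rule card_UN_disjoint)
    show "finite R"
      unfolding R_def by (rule finite_subset[of _ "S \<rightarrow>\<^sub>E C"]) (auto intro: finite_PiE assms)
    show "\<forall>r\<in>R. finite (fibre r)"
      unfolding fibre_def using finite_permutations[OF assms(1)] by auto
    show "\<forall>r\<in>R. \<forall>r'\<in>R. r \<noteq> r' \<longrightarrow> fibre r \<inter> fibre r' = {}"
      by (auto simp: fibre_def)
  qed
  also have "\<dots> = card R * (\<Prod>c\<in>C. fact (card {x\<in>S. g x = c}))"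
    using card_fibre by simp
  finally show ?thesis using decomp by (simp add: R_def)
qed

section \<open>Residue patterns\<close>

lemma periodic_add_mult:
  fixes f :: "nat \<Rightarrow> 'a"
  assumes "\<And>j. f (j + d) = f j"
  shows "f (j + t * d) = f j"
proof (induction t)
  case (Suc t)
  have "f (j + Suc t * d) = f ((j + t * d) + d)" by (simp add: algebra_simps)
  with Suc assms show ?case by simp
qed simp

lemma card_periodic_class:
  fixes f :: "nat \<Rightarrow> 'a"
  assumes "\<And>j. f (j + d) = f j"
  shows "card {j\<in>{..<t * d}. f j = y} = t * card {j\<in>{..<d}. f j = y}"
proof (induction t)
  case (Suc t)
  have "{j\<in>{..<Suc t * d}. f j = y} = {j\<in>{..<t * d}. f j = y} \<union> (\<lambda>j. j + t * d) ` {j\<in>{..<d}. f j = y}"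
  proof (intro equalityI subsetI)
    fix j assume j: "j \<in> {j\<in>{..<Suc t * d}. f j = y}"
    show "j \<in> {j\<in>{..<t * d}. f j = y} \<union> (\<lambda>j. j + t * d) ` {j\<in>{..<d}. f j = y}"
    proof (cases "j < t * d")
      case False
      then have "j = (j - t * d) + t * d" "j - t * d < d" using j by auto
      moreover have "f (j - t * d) = y"
        using j periodic_add_mult[of f d, OF assms, of "j - t * d" t] \<open>j = (j - t * d) + t * d\<close> by simp
      ultimately show ?thesis by blast
    qed (use j in auto)
  qed (auto simp: periodic_add_mult[of f d, OF assms])
  moreover have "card ({j\<in>{..<t * d}. f j = y} \<union> (\<lambda>j. j + t * d) ` {j\<in>{..<d}. f j = y})
      = card {j\<in>{..<t * d}. f j = y} + card ((\<lambda>j. j + t * d) ` {j\<in>{..<d}. f j = y})"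
    by (rule card_Un_disjoint) auto
  moreover have "card ((\<lambda>j. j + t * d) ` {j\<in>{..<d}. f j = y}) = card {j\<in>{..<d}. f j = y}"
    by (rule card_image) (simp add: inj_on_def)
  ultimately show ?case using Suc by simp
qed simp

lemma card_residue_class:
  assumes "y < v"
  shows "card {x\<in>{1..c * v}. x mod v = y} = c"
proof -
  have "{x\<in>{1..c * v}. x mod v = y} = Suc ` {j\<in>{..<c * v}. Suc j mod v = y}"
  proof (intro equalityI subsetI)
    fix x assume "x \<in> {x\<in>{1..c * v}. x mod v = y}"
    then have "x = Suc (x - 1)" "x - 1 \<in> {j\<in>{..<c * v}. Suc j mod v = y}" by auto
    then show "x \<in> Suc ` {j\<in>{..<c * v}. Suc j mod v = y}" by (rule image_eqI)
  qed auto
  then have "card {x\<in>{1..c * v}. x mod v = y} = card {j\<in>{..<c * v}. Suc j mod v = y}"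
    by (simp add: card_image)
  also have "\<dots> = c * card {j\<in>{..<v}. Suc j mod v = y}"
    by (rule card_periodic_class) (metis add_Suc mod_add_self2)
  also have "{j\<in>{..<v}. Suc j mod v = y} = {if y = 0 then v - 1 else y - 1}"
    using assms by (auto simp: mod_Suc split: if_splits)
  finally show ?thesis by simp
qed

definition balanced_words :: "nat \<Rightarrow> nat \<Rightarrow> nat \<Rightarrow> (nat \<Rightarrow> nat) set" where
  "balanced_words v c n = {r \<in> {1..n} \<rightarrow>\<^sub>E {..<v}. \<forall>y<v. card {i\<in>{1..n}. r i = y} = c}"

lemma card_permutes_by_residue_pattern:
  assumes "0 < v" "n = c * v"
  shows "card {\<pi>. \<pi> permutes {1..n} \<and> P (restrict (\<lambda>i. \<pi> i mod v) {1..n})}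
           = card {r \<in> balanced_words v c n. P r} * fact c ^ v"
proof -
  have class_card: "card {x\<in>{1..n}. x mod v = y} = (if y < v then c else 0)" for y
    using assms card_residue_class[of y v c] by auto
  have "(\<forall>y. card {i\<in>{1..n}. r i = y} = card {x\<in>{1..n}. x mod v = y})
      \<longleftrightarrow> (\<forall>y<v. card {i\<in>{1..n}. r i = y} = c)" if "r \<in> {1..n} \<rightarrow>\<^sub>E {..<v}" for r
  proof -
    have "{i\<in>{1..n}. r i = y} = {}" if "\<not> y < v" for y
      using \<open>r \<in> {1..n} \<rightarrow>\<^sub>E {..<v}\<close> that by (auto simp: PiE_iff)
    then show ?thesis using class_card by auto
  qed
  then have "{r \<in> {1..n} \<rightarrow>\<^sub>E {..<v}. (\<forall>y. card {i\<in>{1..n}. r i = y} = card {x\<in>{1..n}. x mod v = y}) \<and> P r}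
      = {r \<in> balanced_words v c n. P r}"
    unfolding balanced_words_def by blast
  moreover have "(\<Prod>y\<in>{..<v}. fact (card {x\<in>{1..n}. x mod v = y})) = (\<Prod>y\<in>{..<v}. fact c :: nat)"
    by (rule prod.cong) (use class_card in auto)
  moreover have "(\<lambda>x. x mod v) ` {1..n} \<subseteq> {..<v}" using assms(1) by auto
  ultimately show ?thesis
    using card_permutes_by_colour_pattern[of "{1..n}" "{..<v}" "\<lambda>x. x mod v" P]
    by (simp add: o_def)
qed

lemma card_balanced_words:
  assumes "0 < v" "n = c * v"
  shows "card (balanced_words v c n) * fact c ^ v = fact n"
  using card_permutes_by_residue_pattern[OF assms, of "\<lambda>_. True"] card_permutations[of "{1..n}" n]
  by simp

section \<open>Cyclic periods\<close>

definition periodic_ext :: "(nat \<Rightarrow> 'a) \<Rightarrow> nat \<Rightarrow> nat \<Rightarrow> 'a" where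
  "periodic_ext s N j = s (j mod N + 1)"

lemma is_cyc_period_iff_periodic_ext:
  assumes "0 < N"
  shows "is_cyc_period s N \<rho> \<longleftrightarrow> (\<forall>j. periodic_ext s N (j + \<rho>) = periodic_ext s N j)"
proof
  assume "is_cyc_period s N \<rho>"
  moreover have "j mod N + 1 \<in> {1..N}" for j
    using assms by (simp add: Suc_leI)
  ultimately have "s ((j mod N + 1 - 1 + \<rho>) mod N + 1) = s (j mod N + 1)" for j
    unfolding is_cyc_period_def by blast
  then show "\<forall>j. periodic_ext s N (j + \<rho>) = periodic_ext s N j"
    by (simp add: periodic_ext_def mod_add_left_eq)
next
  assume shift: "\<forall>j. periodic_ext s N (j + \<rho>) = periodic_ext s N j"
  show "is_cyc_period s N \<rho>" unfolding is_cyc_period_def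
  proof
    fix i assume i: "i \<in> {1..N}"
    then have "(i - 1) mod N = i - 1" by (simp add: Suc_le_lessD)
    then show "s ((i - 1 + \<rho>) mod N + 1) = s i"
      using shift[rule_format, of "i - 1"] i by (simp add: periodic_ext_def)
  qed
qed

lemma is_cyc_period_restrict: "is_cyc_period (restrict s {1..N}) N \<rho> \<longleftrightarrow> is_cyc_period s N \<rho>"
proof -
  have "(i - 1 + \<rho>) mod N + 1 \<in> {1..N}" if "i \<in> {1..N}" for i
    using that by (simp add: Suc_leI)
  then show ?thesis unfolding is_cyc_period_def by auto
qed

lemma is_cyc_period_self: "0 < N \<Longrightarrow> is_cyc_period s N N"
  by (simp add: is_cyc_period_iff_periodic_ext periodic_ext_def)

lemma is_cyc_period_mult:
  assumes "0 < N" "is_cyc_period s N d"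
  shows "is_cyc_period s N (t * d)"
proof -
  have "\<And>j. periodic_ext s N (j + d) = periodic_ext s N j"
    using assms by (simp add: is_cyc_period_iff_periodic_ext)
  then show ?thesis using assms(1) by (simp add: is_cyc_period_iff_periodic_ext periodic_add_mult)
qed

lemma is_cyc_period_mod:
  assumes "0 < N" "is_cyc_period s N d"
  shows "is_cyc_period s N (N mod d)"
proof -
  let ?e = "periodic_ext s N"
  have shift: "\<And>j. ?e (j + d) = ?e j"
    using assms by (simp add: is_cyc_period_iff_periodic_ext)
  have "?e (j + N mod d) = ?e j" for j
  proof -
    have "?e (j + N mod d) = ?e (j + N mod d + N div d * d)"
      by (rule periodic_add_mult[of ?e d, OF shift, symmetric])
    also have "j + N mod d + N div d * d = j + N" by simp
    finally show ?thesis by (simp add: periodic_ext_def)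
  qed
  then show ?thesis using assms(1) by (simp add: is_cyc_period_iff_periodic_ext)
qed

lemma least_cyc_period_le:
  "0 < \<rho> \<Longrightarrow> is_cyc_period s N \<rho> \<Longrightarrow> least_cyc_period s N \<le> \<rho>"
  unfolding least_cyc_period_def by (rule Least_le) simp

lemma
  assumes "0 < N"
  shows least_cyc_period_gt_0: "0 < least_cyc_period s N"
    and is_cyc_period_least: "is_cyc_period s N (least_cyc_period s N)"
proof -
  have "0 < least_cyc_period s N \<and> is_cyc_period s N (least_cyc_period s N)"
    unfolding least_cyc_period_def by (rule LeastI[of _ N]) (simp add: assms is_cyc_period_self)
  then show "0 < least_cyc_period s N" "is_cyc_period s N (least_cyc_period s N)" by auto
qed

lemma least_cyc_period_dvd:
  assumes "0 < N"
  shows "least_cyc_period s N dvd N"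
proof -
  let ?d = "least_cyc_period s N"
  have "\<not> 0 < N mod ?d"
  proof
    assume "0 < N mod ?d"
    then have "?d \<le> N mod ?d"
      by (rule least_cyc_period_le) (rule is_cyc_period_mod[OF assms is_cyc_period_least[OF assms]])
    with mod_less_divisor[OF least_cyc_period_gt_0[OF assms, of s], of N] show False by simp
  qed
  then show ?thesis by (simp add: dvd_eq_mod_eq_0)
qed

lemma least_cyc_period_less_iff:
  assumes "0 < N"
  shows "least_cyc_period s N < N \<longleftrightarrow> (\<exists>q. prime q \<and> q dvd N \<and> is_cyc_period s N (N div q))"
proof
  define d where "d = least_cyc_period s N"
  assume "least_cyc_period s N < N"
  then have less: "d < N" by (simp add: d_def)
  obtain t where N: "N = t * d"
    using least_cyc_period_dvd[OF assms, of s] by (auto elim: dvdE simp: d_def mult.commute)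
  then have "t \<noteq> 1" using less by auto
  then obtain q where q: "prime q" "q dvd t" using prime_factor_nat by blast
  then obtain t' where "t = q * t'" by (auto elim: dvdE)
  then have "N div q = t' * d" using N prime_gt_0_nat[OF q(1)] by (simp add: mult.assoc)
  then have "is_cyc_period s N (N div q)"
    using is_cyc_period_mult[OF assms is_cyc_period_least[OF assms]] by (simp add: d_def)
  moreover have "q dvd N" using q(2) N by simp
  ultimately show "\<exists>q. prime q \<and> q dvd N \<and> is_cyc_period s N (N div q)" using q(1) by blast
next
  assume "\<exists>q. prime q \<and> q dvd N \<and> is_cyc_period s N (N div q)"
  then obtain q where q: "prime q" "q dvd N" "is_cyc_period s N (N div q)" by blast
  have "0 < N div q" using q(1,2) assms by (simp add: dvd_imp_le prime_gt_0_nat div_greater_zero_iff)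
  moreover have "N div q < N" by (rule div_less_dividend[OF prime_gt_1_nat[OF q(1)] assms])
  ultimately show "least_cyc_period s N < N" using least_cyc_period_le[OF _ q(3)] by fastforce
qed

lemma card_class_periodic_ext:
  assumes "M \<le> N"
  shows "card {i\<in>{1..M}. s i = y} = card {j\<in>{..<M}. periodic_ext s N j = y}"
proof -
  have "{i\<in>{1..M}. s i = y} = Suc ` {j\<in>{..<M}. periodic_ext s N j = y}"
  proof (intro equalityI subsetI)
    fix i assume "i \<in> {i\<in>{1..M}. s i = y}"
    then have "i = Suc (i - 1)" "i - 1 \<in> {j\<in>{..<M}. periodic_ext s N j = y}"
      using assms by (auto simp: periodic_ext_def)
    then show "i \<in> Suc ` {j\<in>{..<M}. periodic_ext s N j = y}" by (rule image_eqI)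
  qed (use assms in \<open>auto simp: periodic_ext_def\<close>)
  then show ?thesis by (simp add: card_image)
qed

lemma card_cyc_period_class:
  assumes "0 < L" "N = q * L" "is_cyc_period r N L"
  shows "card {i\<in>{1..N}. r i = y} = q * card {i\<in>{1..L}. r i = y}"
proof (cases "q = 0")
  case False
  then have N: "0 < N" "L \<le> N" using assms(1,2) by auto
  have "\<And>j. periodic_ext r N (j + L) = periodic_ext r N j"
    using assms(3) N(1) by (simp add: is_cyc_period_iff_periodic_ext)
  then show ?thesis
    using card_class_periodic_ext[OF N(2), of r y] card_class_periodic_ext[of N N r y]
      card_periodic_class[of "periodic_ext r N" L q y] assms(2)
    by simp
qed (use assms(2) in simp)

definition cyc_extend :: "nat \<Rightarrow> nat \<Rightarrow> (nat \<Rightarrow> 'a) \<Rightarrow> nat \<Rightarrow> 'a" where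
  "cyc_extend L N r = (\<lambda>i\<in>{1..N}. r ((i - 1) mod L + 1))"

lemma is_cyc_period_cyc_extend:
  assumes "0 < L" "L dvd N"
  shows "is_cyc_period (cyc_extend L N r) N L"
proof (cases "N = 0")
  case False
  have "periodic_ext (cyc_extend L N r) N j = r (j mod L + 1)" for j
    using False assms(2) by (simp add: periodic_ext_def cyc_extend_def mod_mod_cancel Suc_leI)
  then show ?thesis using False by (simp add: is_cyc_period_iff_periodic_ext)
qed (simp add: is_cyc_period_def)

lemma cyc_extend_restrict:
  assumes "0 < L" "L dvd N" "is_cyc_period r N L" "r \<in> extensional {1..N}"
  shows "cyc_extend L N (restrict r {1..L}) = r"
proof
  fix i
  show "cyc_extend L N (restrict r {1..L}) i = r i"
  proof (cases "i \<in> {1..N}")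
    case True
    let ?e = "periodic_ext r N"
    have N: "0 < N" "L \<le> N" using True assms(1,2) by (auto simp: dvd_imp_le)
    have "\<And>j. ?e (j + L) = ?e j" using assms(3) N(1) by (simp add: is_cyc_period_iff_periodic_ext)
    then have "?e ((i - 1) mod L + (i - 1) div L * L) = ?e ((i - 1) mod L)"
      by (rule periodic_add_mult)
    moreover have "i - 1 < N" "(i - 1) mod L < N"
      using True N(2) mod_less_divisor[OF assms(1), of "i - 1"] by auto
    ultimately have "r i = r ((i - 1) mod L + 1)"
      using True by (simp add: periodic_ext_def)
    then show ?thesis using True assms(1) by (simp add: cyc_extend_def Suc_leI)
  next
    case False
    then show ?thesis using assms(4) by (auto simp: cyc_extend_def extensional_def)
  qed
qed

lemma restrict_cyc_extend:
  assumes "L \<le> N" "r \<in> extensional {1..L}"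
  shows "restrict (cyc_extend L N r) {1..L} = r"
  using assms by (auto simp: fun_eq_iff cyc_extend_def extensional_def)

lemma restrict_periodic_balanced_word:
  assumes "0 < L" "0 < q" "N = q * L" "r \<in> balanced_words v (q * m) N" "is_cyc_period r N L"
  shows "restrict r {1..L} \<in> balanced_words v m L"
proof -
  have "card {i\<in>{1..L}. restrict r {1..L} i = y} = m" if "y < v" for y
  proof -
    have "{i\<in>{1..L}. restrict r {1..L} i = y} = {i\<in>{1..L}. r i = y}" by auto
    then show ?thesis
      using card_cyc_period_class[OF assms(1,3,5), of y] assms(2,4) that
      by (simp add: balanced_words_def)
  qed
  moreover have "L \<le> N" using assms(2,3) by simp
  ultimately show ?thesis using assms(2,4) by (auto simp: balanced_words_def PiE_iff)
qed

lemma cyc_extend_balanced_word: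
  assumes "0 < L" "0 < q" "N = q * L" "r \<in> balanced_words v m L"
  shows "cyc_extend L N r \<in> balanced_words v (q * m) N"
proof -
  have "L \<le> N" "L dvd N" using assms(2,3) by auto
  then have period: "is_cyc_period (cyc_extend L N r) N L"
    using assms(1) by (intro is_cyc_period_cyc_extend)
  have "{i\<in>{1..L}. cyc_extend L N r i = y} = {i\<in>{1..L}. r i = y}" for y
    using \<open>L \<le> N\<close> by (auto simp: cyc_extend_def)
  then have "card {i\<in>{1..N}. cyc_extend L N r i = y} = q * m" if "y < v" for y
    using card_cyc_period_class[OF assms(1,3) period, of y] assms(4) that
    by (simp add: balanced_words_def)
  moreover have "cyc_extend L N r \<in> {1..N} \<rightarrow>\<^sub>E {..<v}"
    using assms(1,4) by (auto simp: balanced_words_def PiE_iff cyc_extend_def Suc_leI)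
  ultimately show ?thesis by (simp add: balanced_words_def)
qed

lemma card_periodic_balanced_words:
  assumes "0 < L" "0 < q" "N = q * L"
  shows "card {r \<in> balanced_words v (q * m) N. is_cyc_period r N L} = card (balanced_words v m L)"
proof -
  have "L \<le> N" "L dvd N" using assms by auto
  have "bij_betw (\<lambda>r. restrict r {1..L}) {r \<in> balanced_words v (q * m) N. is_cyc_period r N L}
      (balanced_words v m L)"
  proof (rule bij_betw_byWitness[where f' = "cyc_extend L N"])
    show "\<forall>r\<in>{r \<in> balanced_words v (q * m) N. is_cyc_period r N L}.
        cyc_extend L N (restrict r {1..L}) = r"
    proof
      fix r assume "r \<in> {r \<in> balanced_words v (q * m) N. is_cyc_period r N L}"
      then show "cyc_extend L N (restrict r {1..L}) = r"
        by (intro cyc_extend_restrict assms(1) \<open>L dvd N\<close>) (auto simp: balanced_words_def PiE_def)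
    qed
    show "\<forall>r\<in>balanced_words v m L. restrict (cyc_extend L N r) {1..L} = r"
    proof
      fix r assume "r \<in> balanced_words v m L"
      then show "restrict (cyc_extend L N r) {1..L} = r"
        by (intro restrict_cyc_extend \<open>L \<le> N\<close>) (auto simp: balanced_words_def PiE_def)
    qed
    show "(\<lambda>r. restrict r {1..L}) ` {r \<in> balanced_words v (q * m) N. is_cyc_period r N L}
        \<subseteq> balanced_words v m L"
      using restrict_periodic_balanced_word[OF assms] by blast
    show "cyc_extend L N ` balanced_words v m L
        \<subseteq> {r \<in> balanced_words v (q * m) N. is_cyc_period r N L}"
      using cyc_extend_balanced_word[OF assms] is_cyc_period_cyc_extend[OF assms(1)] \<open>L dvd N\<close>
      by blast
  qed
  then show ?thesis by (rule bij_betw_same_card)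
qed

section \<open>Permutations whose residue sequence has a given period\<close>

lemma card_permutes_residue_period:
  assumes "0 < v" "N = k * v" "0 < k" "0 < q" "q dvd k"
  shows "card {\<pi>. \<pi> permutes {1..N} \<and> is_cyc_period (\<lambda>i. \<pi> i mod v) N (N div q)}
           * fact (k div q) ^ v = fact (N div q) * fact k ^ v"
proof -
  define m L where "m = k div q" and "L = m * v"
  have k: "k = q * m" and N: "N = q * L" "N div q = L"
    using assms by (auto simp: m_def L_def)
  have "0 < L" using k assms(1,3) by (simp add: L_def)
  have "card {\<pi>. \<pi> permutes {1..N} \<and> is_cyc_period (\<lambda>i. \<pi> i mod v) N L}
      = card {r \<in> balanced_words v k N. is_cyc_period r N L} * fact k ^ v"
    using card_permutes_by_residue_pattern[OF assms(1,2), of "\<lambda>r. is_cyc_period r N L"]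
    by (simp only: is_cyc_period_restrict)
  also have "card {r \<in> balanced_words v k N. is_cyc_period r N L} = card (balanced_words v m L)"
    unfolding k by (rule card_periodic_balanced_words[OF \<open>0 < L\<close> assms(4) N(1)])
  finally show ?thesis
    using card_balanced_words[OF assms(1) L_def] by (simp add: N(2) m_def[symmetric] algebra_simps)
qed

lemma residue_least_period_less_iff:
  assumes "0 < v" "N = k * v" "0 < k" "\<pi> permutes {1..N}"
  shows "least_cyc_period (\<lambda>i. \<pi> i mod v) N < N
           \<longleftrightarrow> (\<exists>q. prime q \<and> q dvd k \<and> is_cyc_period (\<lambda>i. \<pi> i mod v) N (N div q))"
proof -
  have "0 < N" using assms by simp
  have "q dvd k" if "prime q" "q dvd N" "is_cyc_period (\<lambda>i. \<pi> i mod v) N (N div q)" for q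
  proof -
    have "0 < N div q"
      using that(1,2) \<open>0 < N\<close> by (simp add: dvd_imp_le prime_gt_0_nat div_greater_zero_iff)
    have "k = card {i\<in>{1..N}. \<pi> i mod v = 0}"
      using card_permutes_colour_class[OF assms(4), of "\<lambda>x. x mod v" 0]
        card_residue_class[of 0 v k] assms(1,2) by simp
    also have "\<dots> = q * card {i\<in>{1..N div q}. \<pi> i mod v = 0}"
      using that(2) by (intro card_cyc_period_class[OF \<open>0 < N div q\<close> _ that(3)]) simp
    finally show ?thesis by simp
  qed
  then show ?thesis
    unfolding least_cyc_period_less_iff[OF \<open>0 < N\<close>] using assms(2) by (blast intro: dvd_mult2)
qed

lemma
  fixes A :: "'i \<Rightarrow> 'a set"
  assumes "finite P" "finite I" "(\<Union>i\<in>I. A i) \<subseteq> P"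
  shows card_Diff_UN_ge: "real (card P) - (\<Sum>i\<in>I. real (card (A i))) \<le> real (card (P - (\<Union>i\<in>I. A i)))"
    and card_Diff_UN_le: "j \<in> I \<Longrightarrow> real (card (P - (\<Union>i\<in>I. A i))) \<le> real (card P) - real (card (A j))"
proof -
  note sub = assms(3)
  have fin: "finite (\<Union>i\<in>I. A i)" using sub assms(1) by (rule finite_subset)
  have card_diff: "real (card (P - (\<Union>i\<in>I. A i))) = real (card P) - real (card (\<Union>i\<in>I. A i))"
    using card_Diff_subset[OF fin sub] card_mono[OF assms(1) sub] by (simp add: of_nat_diff)
  have "real (card (\<Union>i\<in>I. A i)) \<le> (\<Sum>i\<in>I. real (card (A i)))"
    using card_UN_le[OF assms(2), of A] by (metis of_nat_le_iff of_nat_sum)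
  then show "real (card P) - (\<Sum>i\<in>I. real (card (A i))) \<le> real (card (P - (\<Union>i\<in>I. A i)))"
    using card_diff by linarith
  assume "j \<in> I"
  then have "card (A j) \<le> card (\<Union>i\<in>I. A i)" using fin by (intro card_mono) auto
  then show "real (card (P - (\<Union>i\<in>I. A i))) \<le> real (card P) - real (card (A j))"
    using card_diff by linarith
qed

lemma residue_full_period_bounds:
  assumes "0 < v" "N = k * v" "0 < k"
  defines "Q \<equiv> {q. prime q \<and> q dvd k}"
    and "tm \<equiv> \<lambda>q. fact (N div q) * fact k ^ v / (fact N * fact (k div q) ^ v) :: real"
    and "T \<equiv> {\<pi>. \<pi> permutes {1..N} \<and> least_cyc_period (\<lambda>i. \<pi> i mod v) N = N}"
  shows "fact N * (1 - (\<Sum>q\<in>Q. tm q)) \<le> real (card T)"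
    and "q \<in> Q \<Longrightarrow> real (card T) \<le> fact N * (1 - tm q)"
proof -
  define A where "A q = {\<pi>. \<pi> permutes {1..N} \<and> is_cyc_period (\<lambda>i. \<pi> i mod v) N (N div q)}" for q
  define P where "P = {\<pi>. \<pi> permutes ({1..N} :: nat set)}"
  have "\<pi> \<in> T \<longleftrightarrow> \<pi> \<in> P - (\<Union>q\<in>Q. A q)" for \<pi>
  proof (cases "\<pi> permutes {1..N}")
    case True
    have "least_cyc_period (\<lambda>i. \<pi> i mod v) N \<le> N"
      using assms(2,3) assms(1) by (intro least_cyc_period_le is_cyc_period_self) simp_all
    then show ?thesis
      using residue_least_period_less_iff[OF assms(1-3) True] True
      by (auto simp: T_def P_def A_def Q_def)
  qed (simp add: T_def P_def)
  then have T_eq: "T = P - (\<Union>q\<in>Q. A q)" by blast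
  have P: "finite P" "card P = fact N" unfolding P_def by (simp_all add: finite_permutations card_permutations)
  have card_A: "real (card (A q)) = fact N * tm q" if "q \<in> Q" for q
  proof -
    from that have "0 < q" "q dvd k" by (auto simp: Q_def prime_gt_0_nat)
    then have "card (A q) * fact (k div q) ^ v = fact (N div q) * fact k ^ v"
      unfolding A_def using card_permutes_residue_period assms(1-3) by blast
    then have "real (card (A q)) * fact (k div q) ^ v = fact (N div q) * fact k ^ v"
      by (metis of_nat_fact of_nat_mult of_nat_power)
    then show ?thesis by (simp add: tm_def field_simps)
  qed
  have "finite Q" unfolding Q_def using assms(3) by (auto intro: finite_subset[of _ "{d. d dvd k}"])
  have "(\<Union>q\<in>Q. A q) \<subseteq> P" by (auto simp: A_def P_def)
  note bounds = card_Diff_UN_ge[OF P(1) \<open>finite Q\<close> this] card_Diff_UN_le[OF P(1) \<open>finite Q\<close> this]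
  have "(\<Sum>q\<in>Q. real (card (A q))) = fact N * (\<Sum>q\<in>Q. tm q)"
    unfolding sum_distrib_left by (rule sum.cong) (simp_all add: card_A)
  then show "fact N * (1 - (\<Sum>q\<in>Q. tm q)) \<le> real (card T)"
    using bounds(1) by (simp add: T_eq P(2) algebra_simps)
  show "real (card T) \<le> fact N * (1 - tm q)" if "q \<in> Q"
    using bounds(2)[OF that] card_A[OF that] by (simp add: T_eq P(2) algebra_simps)
qed

section \<open>Size of the correction terms\<close>

lemma fact_mult_power_le: "fact n * (n + 1) ^ w \<le> (fact (n + w) :: nat)"
proof (induction w)
  case (Suc w)
  have "fact n * (n + 1) ^ Suc w = (n + 1) * (fact n * (n + 1) ^ w)" by (simp add: algebra_simps)
  also have "\<dots> \<le> (n + w + 1) * fact (n + w)" using Suc.IH by (intro mult_le_mono) simp_all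
  also have "\<dots> = fact (n + Suc w)" by (simp add: algebra_simps)
  finally show ?case .
qed simp

lemma two_mult_power_fact_le:
  assumes "2 \<le> v"
  shows "2 * (j + 1) ^ v * fact (v * j) \<le> (fact (v * (j + 1)) :: nat)"
proof -
  obtain w where w: "v = Suc w" using assms by (cases v) auto
  have "2 * (j + 1) ^ v * fact (v * j) = (2 * (j + 1)) * (fact (v * j) * (j + 1) ^ w)"
    using w by (simp add: algebra_simps)
  also have "\<dots> \<le> (2 * (j + 1)) * (fact (v * j) * (v * j + 1) ^ w)"
    using assms by (intro mult_le_mono2 power_mono) simp_all
  also have "\<dots> \<le> (2 * (j + 1)) * fact (v * j + w)"
    by (rule mult_le_mono2[OF fact_mult_power_le])
  also have "\<dots> \<le> v * (j + 1) * fact (v * j + w)"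
    using assms by (intro mult_le_mono1) simp
  also have "v * (j + 1) = Suc (v * j + w)" using w by simp
  also have "Suc (v * j + w) * fact (v * j + w) = fact (v * (j + 1))"
    by (simp only: \<open>v * (j + 1) = Suc (v * j + w)\<close> fact_Suc of_nat_id)
  finally show ?thesis .
qed

lemma power_two_fact_ratio_le:
  assumes "2 \<le> v" "m \<le> j"
  shows "2 ^ (j - m) * fact j ^ v * fact (v * m) \<le> (fact (v * j) * fact m ^ v :: nat)"
  using assms(2)
proof (induction j rule: dec_induct)
  case (step j)
  have "fact (Suc j) ^ v = (j + 1) ^ v * (fact j ^ v :: nat)"
    unfolding fact_Suc of_nat_id power_mult_distrib by simp
  moreover have "2 ^ (Suc j - m) = 2 * (2::nat) ^ (j - m)"
    using step.hyps by (simp add: Suc_diff_le)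
  ultimately have "2 ^ (Suc j - m) * fact (Suc j) ^ v * fact (v * m)
      = (2 * (j + 1) ^ v) * (2 ^ (j - m) * fact j ^ v * fact (v * m))"
    by (simp add: mult_ac)
  also have "\<dots> \<le> (2 * (j + 1) ^ v) * (fact (v * j) * fact m ^ v)"
    by (rule mult_le_mono2[OF step.IH])
  also have "\<dots> \<le> fact (v * (j + 1)) * fact m ^ v"
    using two_mult_power_fact_le[OF assms(1), of j] by (simp add: algebra_simps)
  finally show ?case by simp
qed simp

lemma period_ratio_le:
  assumes "2 \<le> v" "N = k * v" "2 \<le> q" "q dvd k"
  shows "fact (N div q) * fact k ^ v / (fact N * fact (k div q) ^ v) \<le> (1 / 2 powr (real k / 2) :: real)"
proof -
  define m where "m = k div q"
  have "N div q = v * m" "N = v * k" using assms(2-4) by (auto simp: m_def)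
  have "m \<le> k div 2" unfolding m_def using assms(3) by (simp add: div_le_mono2)
  then have "real k / 2 \<le> real (k - m)" by linarith
  have "m \<le> k" using \<open>m \<le> k div 2\<close> div_le_dividend le_trans by blast
  then have "2 ^ (k - m) * fact k ^ v * fact (v * m) \<le> (fact (v * k) * fact m ^ v :: nat)"
    by (rule power_two_fact_ratio_le[OF assms(1)])
  then have "2 ^ (k - m) * fact k ^ v * fact (v * m) \<le> (fact (v * k) * fact m ^ v :: real)"
    by (metis (mono_tags) of_nat_fact of_nat_mult of_nat_power of_nat_le_iff of_nat_numeral)
  then have "fact (v * m) * fact k ^ v / (fact (v * k) * fact m ^ v) \<le> (1 / 2 ^ (k - m) :: real)"
    by (simp add: field_simps)
  also have "\<dots> \<le> 1 / 2 powr (real k / 2)"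
    using \<open>real k / 2 \<le> real (k - m)\<close> by (simp add: powr_realpow[symmetric] divide_simps)
  finally show ?thesis using \<open>N div q = v * m\<close> \<open>N = v * k\<close> by (simp add: m_def)
qed

lemma sum_period_ratio_le:
  assumes "2 \<le> v" "N = k * v" "0 < k"
  shows "(\<Sum>q\<in>{q. prime q \<and> q dvd k}. fact (N div q) * fact k ^ v / (fact N * fact (k div q) ^ v))
           \<le> real k / 2 powr (real k / 2)"
proof -
  have "{q. prime q \<and> q dvd k} \<subseteq> {1..k}"
    using assms(3) by (auto simp: dvd_imp_le prime_ge_1_nat)
  then have "card {q. prime q \<and> q dvd k} \<le> k" using card_mono[of "{1..k}"] by fastforce
  have "(\<Sum>q\<in>{q. prime q \<and> q dvd k}. fact (N div q) * fact k ^ v / (fact N * fact (k div q) ^ v))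
      \<le> (\<Sum>q\<in>{q. prime q \<and> q dvd k}. 1 / 2 powr (real k / 2))"
    using assms(1,2) by (intro sum_mono period_ratio_le) (auto simp: prime_ge_2_nat)
  also have "\<dots> \<le> real k / 2 powr (real k / 2)"
    using \<open>card {q. prime q \<and> q dvd k} \<le> k\<close> by (simp add: divide_right_mono)
  finally show ?thesis .
qed

section \<open>The bounds for T\<close>

lemma pred_eq_div_mult:
  fixes p v :: nat
  assumes "p mod v = 1"
  shows "p - 1 = (p - 1) div v * v"
proof -
  have "p - 1 = v * (p div v)" using minus_mod_eq_mult_div[of p v] assms by simp
  then show ?thesis by (cases "v = 0") simp_all
qed

lemma T_count_le_fact: "T_count v p \<le> fact (p - 1)"
proof -
  have "T_count v p \<le> card {\<pi>. \<pi> permutes {1..p - 1}}"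
    unfolding T_count_def by (intro card_mono) (auto simp: finite_permutations)
  then show ?thesis by (simp add: card_permutations)
qed

lemma T_count_bounds:
  assumes "2 \<le> v" "p mod v = 1" "v < p - 1"
  defines "k \<equiv> (p - 1) div v"
  defines "Q \<equiv> {q. prime q \<and> q dvd k}"
    and "tm \<equiv> \<lambda>q. fact ((p - 1) div q) * fact k ^ v / (fact (p - 1) * fact (k div q) ^ v) :: real"
  shows "fact (p - 1) * (1 - (\<Sum>q\<in>Q. tm q)) \<le> real (T_count v p)"
    and "real (T_count v p) \<le> fact (p - 1) * (1 - tm (Min Q))"
proof -
  have N: "p - 1 = k * v" unfolding k_def using assms(2) by (rule pred_eq_div_mult)
  then have "1 * v < k * v" using assms(3) by simp
  then have "1 < k" by simp
  then obtain q where "prime q" "q dvd k" using prime_factor_nat[of k] by auto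
  then have "Min Q \<in> Q"
    using \<open>1 < k\<close> unfolding Q_def by (intro Min_in) (auto intro: finite_subset[of _ "{d. d dvd k}"])
  note bounds = residue_full_period_bounds[of v "p - 1" k, OF _ N]
  show "fact (p - 1) * (1 - (\<Sum>q\<in>Q. tm q)) \<le> real (T_count v p)"
    using bounds(1) assms(1) \<open>1 < k\<close> unfolding T_count_def Q_def tm_def by simp
  show "real (T_count v p) \<le> fact (p - 1) * (1 - tm (Min Q))"
    using bounds(2) \<open>Min Q \<in> Q\<close> assms(1) \<open>1 < k\<close> unfolding T_count_def Q_def tm_def by simp
qed

lemma T_count_asymptotic_lower_bound:
  assumes "2 \<le> v" "0 < \<epsilon>"
  shows "\<exists>n. \<forall>p. n \<le> p \<and> p mod v = 1 \<longrightarrow> fact (p - 1) * (1 - \<epsilon>) \<le> real (T_count v p)"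
proof -
  have "(\<lambda>k::nat. real k / 2 powr (real k / 2)) \<longlonglongrightarrow> 0" by real_asymp
  from order_tendstoD(2)[OF this assms(2)]
  obtain K where K: "\<And>k. K \<le> k \<Longrightarrow> real k / 2 powr (real k / 2) < \<epsilon>"
    unfolding eventually_sequentially by blast
  have "fact (p - 1) * (1 - \<epsilon>) \<le> real (T_count v p)" if p: "Suc K * v + 1 \<le> p" "p mod v = 1" for p
  proof -
    define k where "k = (p - 1) div v"
    have N: "p - 1 = k * v" unfolding k_def using p(2) by (rule pred_eq_div_mult)
    then have "Suc K * v \<le> k * v" using p(1) by linarith
    then have "0 < v \<longrightarrow> Suc K \<le> k" by (rule mult_le_cancel2[THEN iffD1])
    then have "K < k" using assms(1) by simp
    define S where "S = (\<Sum>q\<in>{q. prime q \<and> q dvd k}.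
      fact ((p - 1) div q) * fact k ^ v / (fact (p - 1) * fact (k div q) ^ v) :: real)"
    have "S \<le> \<epsilon>"
      using sum_period_ratio_le[OF assms(1) N] K[OF less_imp_le[OF \<open>K < k\<close>]] \<open>K < k\<close>
      by (simp add: S_def)
    then have "fact (p - 1) * (1 - \<epsilon>) \<le> fact (p - 1) * (1 - S)"
      by (intro mult_left_mono) simp_all
    also have "\<dots> \<le> real (T_count v p)"
      using residue_full_period_bounds(1)[of v "p - 1" k, OF _ N] assms(1) \<open>K < k\<close>
      unfolding T_count_def S_def by simp
    finally show ?thesis .
  qed
  then show ?thesis by blast
qed

theorem theorem1:
  fixes v :: nat
  assumes "v \<ge> 2"
  shows "(\<forall>p::nat. prime p \<and> p mod v = 1 \<and> p - 1 > v \<longrightarrow>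
           (let k = (p - 1) div v; Q = {q. prime q \<and> q dvd k}; q' = Min Q;
                tm = (\<lambda>q. fact ((p - 1) div q) * (fact k) ^ v /
                          (fact (p - 1) * (fact (k div q)) ^ v) :: real)
            in fact (p - 1) * (1 - (\<Sum>q\<in>Q. tm q)) \<le> real (T_count v p) \<and>
               real (T_count v p) \<le> fact (p - 1) * (1 - tm q')))
       \<and> (\<forall>\<epsilon>::real. \<epsilon> > 0 \<longrightarrow> (\<exists>n. \<forall>p::nat. prime p \<and> p \<ge> n \<and> p mod v = 1 \<longrightarrow>
             fact (p - 1) * (1 - \<epsilon>) \<le> real (T_count v p) \<and>
             real (T_count v p) \<le> fact (p - 1)))"
proof -
  have "real (T_count v p) \<le> fact (p - 1)" for p
    using T_count_le_fact[of v p] by (metis of_nat_fact of_nat_le_iff)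
  then show ?thesis
    using T_count_bounds[OF assms] T_count_asymptotic_lower_bound[OF assms]
    unfolding Let_def by blast
qed

end
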